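(* Suppose $P$ is a convex, non-degenerate Euclidean polygon in $\mathbb{R}^2$ which is symmetric under rotation by $\pi$ about the origin. Then there exist $A\in SL(2,\mathbb{R})$ and $r>0$ such that $B^1(r)\subseteq A\cdot P\subseteq B^\infty(r)$.
   Context: $B^1(r)$ and $B^\infty(r)$ denote the closed balls of radius $r$ about the origin in $\mathbb{R}^2$ with respect to the $\ell^1$ and $\ell^\infty$ norms respectively. Non-degenerate means $P$ has nonempty interior (is not contained in a line). *)

theory Defs
  imports "HOL-Analysis.Analysis"
begin

definition convex_polygon :: "(real^2) set \<Rightarrow> bool" where
  "convex_polygon P \<longleftrightarrow> (\<exists>V. finite V \<and> P = convex hull V)"

definition ball1 :: "real \<Rightarrow> (real^2) set" where
  "ball1 r = {x. \<bar>x $ 1\<bar> + \<bar>x $ 2\<bar> \<le> r}"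

definition ballinf :: "real \<Rightarrow> (real^2) set" where
  "ballinf r = {x. max \<bar>x $ 1\<bar> \<bar>x $ 2\<bar> \<le> r}"

end

theory Submission
  imports Defs
begin

text \<open>Choose \<open>u, v \<in> P\<close> maximising the determinant \<open>det2 u v = M\<close> over \<open>P \<times> P\<close>; it is positive
  because \<open>P\<close> has interior. By maximality and the symmetry of \<open>P\<close>, every \<open>x \<in> P\<close> satisfies
  \<open>\<bar>det2 x v\<bar>, \<bar>det2 u x\<bar> \<le> M\<close>, while \<open>P\<close> contains every \<open>a u + b v\<close> with \<open>\<bar>a\<bar> + \<bar>b\<bar> \<le> 1\<close>.
  In the coordinates \<open>x \<mapsto> (det2 x v, det2 u x) / sqrt M\<close>, a unimodular linear map, \<open>P\<close> is
  therefore squeezed between the \<open>\<ell>\<^sup>1\<close> and the \<open>\<ell>\<^sup>\<infinity>\<close> ball of radius \<open>sqrt M\<close>.\<close>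

definition det2 :: "real^2 \<Rightarrow> real^2 \<Rightarrow> real" where
  "det2 x y = x$1 * y$2 - x$2 * y$1"

lemma det2_swap: "det2 y x = - det2 x y"
  unfolding det2_def by simp

lemma det2_uminus [simp]: "det2 (- x) y = - det2 x y" "det2 x (- y) = - det2 x y"
  unfolding det2_def by simp_all

lemma det2_combination:
  "det2 (a *\<^sub>R u + b *\<^sub>R v) v = a * det2 u v"
  "det2 u (a *\<^sub>R u + b *\<^sub>R v) = b * det2 u v"
  unfolding det2_def by (simp_all add: algebra_simps)

lemma convex_symmetric_zero_mem:
  fixes P :: "'a::real_vector set"
  assumes "convex P" "\<And>x. x \<in> P \<Longrightarrow> - x \<in> P" "u \<in> P"
  shows "0 \<in> P"
  using convexD[OF assms(1) assms(3) assms(2)[OF assms(3)], of "1/2" "1/2"]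
  by (simp flip: scaleR_add_right)

lemma convex_symmetric_l1_combination_mem:
  fixes P :: "'a::real_vector set"
  assumes cvx: "convex P" and sym: "\<And>x. x \<in> P \<Longrightarrow> - x \<in> P"
    and "u \<in> P" "v \<in> P" "\<bar>a\<bar> + \<bar>b\<bar> \<le> 1"
  shows "a *\<^sub>R u + b *\<^sub>R v \<in> P"
proof -
  define p where "p = (if a \<ge> 0 then u else - u)"
  define q where "q = (if b \<ge> 0 then v else - v)"
  have "p \<in> P" "q \<in> P" "0 \<in> P"
    unfolding p_def q_def using assms convex_symmetric_zero_mem[OF cvx sym] by auto
  then have "convex hull {0, p, q} \<subseteq> P"
    using cvx by (simp add: hull_minimal)
  moreover have "\<bar>a\<bar> *\<^sub>R p + \<bar>b\<bar> *\<^sub>R q \<in> convex hull {0, p, q}"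
    using assms(5) by (force simp: convex_hull_3_alt)
  moreover have "\<bar>a\<bar> *\<^sub>R p + \<bar>b\<bar> *\<^sub>R q = a *\<^sub>R u + b *\<^sub>R v"
    unfolding p_def q_def by simp
  ultimately show ?thesis by auto
qed

lemma det2_nonzero_if_interior:
  fixes P :: "(real^2) set"
  assumes "interior P \<noteq> {}"
  obtains x y where "x \<in> P" "y \<in> P" "det2 x y \<noteq> 0"
proof -
  obtain c e where "e > 0" "ball c e \<subseteq> P"
    using assms open_contains_ball_eq[OF open_interior] interior_subset by (metis ex_in_conv subset_trans)
  moreover define d1 :: "real^2" where "d1 = vector [e/2, 0]"
  moreover define d2 :: "real^2" where "d2 = vector [0, e/2]"
  ultimately have "c \<in> P" "c + d1 \<in> P" "c + d2 \<in> P"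
    by (auto simp: subset_iff dist_norm norm_vec_def L2_set_def sum_2)
  moreover have "det2 (c + d1) (c + d2) \<noteq> 0 \<or> det2 (c + d1) c \<noteq> 0 \<or> det2 c (c + d2) \<noteq> 0"
    using \<open>e > 0\<close> unfolding det2_def d1_def d2_def by (auto simp: algebra_simps)
  ultimately show ?thesis using that by blast
qed

text \<open>The maximising pair is an Auerbach basis of the norm whose unit ball is \<open>P\<close>.\<close>

lemma det2_maximal_pair:
  fixes P :: "(real^2) set"
  assumes "compact P" "interior P \<noteq> {}" "\<And>x. x \<in> P \<Longrightarrow> - x \<in> P"
  obtains u v where "u \<in> P" "v \<in> P" "det2 u v > 0"
    "\<And>x. x \<in> P \<Longrightarrow> \<bar>det2 x v\<bar> \<le> det2 u v \<and> \<bar>det2 u x\<bar> \<le> det2 u v"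
proof -
  obtain x y where xy: "x \<in> P" "y \<in> P" "det2 x y \<noteq> 0"
    using det2_nonzero_if_interior[OF assms(2)] .
  have "continuous_on (P \<times> P) (\<lambda>z. det2 (fst z) (snd z))"
    unfolding det2_def by (intro continuous_intros)
  then obtain w where w: "w \<in> P \<times> P" "\<And>z. z \<in> P \<times> P \<Longrightarrow> det2 (fst z) (snd z) \<le> det2 (fst w) (snd w)"
    using continuous_attains_sup[OF compact_Times[OF assms(1) assms(1)]] xy by blast
  define u v where "u = fst w" and "v = snd w"
  have uv: "u \<in> P" "v \<in> P" using w(1) unfolding u_def v_def by auto
  have max: "det2 x' y' \<le> det2 u v" if "x' \<in> P" "y' \<in> P" for x' y'
    using w(2)[of "(x', y')"] that unfolding u_def v_def by simp
  show ?thesis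
  proof (rule that[OF uv])
    show "det2 u v > 0"
      using max[OF xy(1,2)] max[OF xy(2,1)] xy(3) det2_swap[of x y] by linarith
    show "\<bar>det2 x' v\<bar> \<le> det2 u v \<and> \<bar>det2 u x'\<bar> \<le> det2 u v" if "x' \<in> P" for x'
      using max[of x' v] max[of "- x'" v] max[of u x'] max[of u "- x'"] that uv assms(3)
      by (auto simp: abs_le_iff)
  qed
qed

lemma det2_coordinate_matrix:
  fixes u v :: "real^2" and r :: real
  obtains A :: "real^2^2" where "det A = det2 u v / r\<^sup>2"
    "\<And>x. A *v x = vector [det2 x v / r, det2 u x / r]"
proof
  let ?A = "vector [vector [v$2 / r, - v$1 / r], vector [- u$2 / r, u$1 / r]] :: real^2^2"
  show "det ?A = det2 u v / r\<^sup>2"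
    unfolding det_2 det2_def by (simp add: power2_eq_square diff_divide_distrib mult.commute)
  show "?A *v x = vector [det2 x v / r, det2 u x / r]" for x
    unfolding det2_def
    by (simp add: vec_eq_iff forall_2 matrix_vector_mult_def sum_2 diff_divide_distrib mult.commute)
qed

theorem lemma6p5:
  fixes P :: "(real^2) set"
  assumes "convex_polygon P"
    and "interior P \<noteq> {}"
    and "\<And>x. x \<in> P \<Longrightarrow> - x \<in> P"
  shows "\<exists>(A :: real^2^2) r. det A = 1 \<and> r > 0 \<and>
           ball1 r \<subseteq> (\<lambda>x. A *v x) ` P \<and> (\<lambda>x. A *v x) ` P \<subseteq> ballinf r"
proof -
  obtain V where "finite V" "P = convex hull V"
    using assms(1) unfolding convex_polygon_def by blast
  then have cvx: "convex P" and "compact P"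
    by (simp_all add: compact_convex_hull finite_imp_compact)
  obtain u v where uv: "u \<in> P" "v \<in> P" "det2 u v > 0"
    and bound: "\<And>x. x \<in> P \<Longrightarrow> \<bar>det2 x v\<bar> \<le> det2 u v \<and> \<bar>det2 u x\<bar> \<le> det2 u v"
    using det2_maximal_pair[OF \<open>compact P\<close> assms(2,3)] by blast
  define r where "r = sqrt (det2 u v)"
  have r: "r > 0" "r\<^sup>2 = det2 u v" using uv(3) unfolding r_def by simp_all
  obtain A :: "real^2^2" where detA: "det A = det2 u v / r\<^sup>2"
    and A: "\<And>x. A *v x = vector [det2 x v / r, det2 u x / r]"
    using det2_coordinate_matrix[of u v r] by blast
  have "(\<lambda>x. A *v x) ` P \<subseteq> ballinf r"
  proof clarify
    fix x assume "x \<in> P"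
    then have "\<bar>det2 x v\<bar> \<le> r * r" "\<bar>det2 u x\<bar> \<le> r * r"
      using bound r(2) by (simp_all add: power2_eq_square)
    then show "A *v x \<in> ballinf r"
      unfolding ballinf_def A using r(1) by (simp add: abs_divide divide_le_eq)
  qed
  moreover have "ball1 r \<subseteq> (\<lambda>x. A *v x) ` P"
  proof
    fix y assume "y \<in> ball1 r"
    then have "\<bar>y$1 / r\<bar> + \<bar>y$2 / r\<bar> \<le> 1"
      using r(1) unfolding ball1_def by (simp add: abs_divide add_divide_distrib[symmetric])
    then have "(y$1 / r) *\<^sub>R u + (y$2 / r) *\<^sub>R v \<in> P"
      using convex_symmetric_l1_combination_mem[OF cvx assms(3) uv(1,2)] by blast
    moreover have "A *v ((y$1 / r) *\<^sub>R u + (y$2 / r) *\<^sub>R v) = y"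
      using r uv(3) unfolding A det2_combination by (simp add: vec_eq_iff forall_2 power2_eq_square)
    ultimately show "y \<in> (\<lambda>x. A *v x) ` P" by (metis image_eqI)
  qed
  moreover have "det A = 1" using detA r uv(3) by simp
  ultimately show ?thesis using r(1) by blast
qed

end
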